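(* Let $L$ be a finite-dimensional nilpotent Lie superalgebra with $\dim L'=(r\mid s)$ where $r+s=1$, and suppose $\dim_{\mathbb{F}} L/Z(L)>2$ (total dimension). Then $L$ is not capable.
   Context: All algebras are over a field $\mathbb{F}$ of characteristic $\neq 2,3$. $L'=[L,L]$, $Z(L)$ is the center, $\dim L=(m\mid n)$ means even part of dimension $m$ and odd part of dimension $n$. A Lie superalgebra $L$ is capable if $L\cong H/Z(H)$ for some Lie superalgebra $H$. *)

theory Defs
  imports Main
begin

record ('k, 'v) lsa =
  carrier :: "'v set"
  even    :: "'v set"
  odd     :: "'v set"
  add     :: "'v \<Rightarrow> 'v \<Rightarrow> 'v"
  zero    :: "'v"
  smult   :: "'k \<Rightarrow> 'v \<Rightarrow> 'v"
  br      :: "'v \<Rightarrow> 'v \<Rightarrow> 'v"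

definition vector_space_on :: "('k::field, 'v) lsa \<Rightarrow> bool" where
  "vector_space_on A \<longleftrightarrow>
     zero A \<in> carrier A \<and>
     (\<forall>x\<in>carrier A. \<forall>y\<in>carrier A. add A x y \<in> carrier A) \<and>
     (\<forall>c. \<forall>x\<in>carrier A. smult A c x \<in> carrier A) \<and>
     (\<forall>x\<in>carrier A. \<forall>y\<in>carrier A. \<forall>z\<in>carrier A. add A (add A x y) z = add A x (add A y z)) \<and>
     (\<forall>x\<in>carrier A. \<forall>y\<in>carrier A. add A x y = add A y x) \<and>
     (\<forall>x\<in>carrier A. add A x (zero A) = x) \<and>
     (\<forall>x\<in>carrier A. \<exists>y\<in>carrier A. add A x y = zero A) \<and>
     (\<forall>c d. \<forall>x\<in>carrier A. smult A c (smult A d x) = smult A (c * d) x) \<and>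
     (\<forall>x\<in>carrier A. smult A 1 x = x) \<and>
     (\<forall>c. \<forall>x\<in>carrier A. \<forall>y\<in>carrier A. smult A c (add A x y) = add A (smult A c x) (smult A c y)) \<and>
     (\<forall>c d. \<forall>x\<in>carrier A. smult A (c + d) x = add A (smult A c x) (smult A d x))"

definition subspace_on :: "('k::field, 'v) lsa \<Rightarrow> 'v set \<Rightarrow> bool" where
  "subspace_on A W \<longleftrightarrow> W \<subseteq> carrier A \<and> zero A \<in> W \<and>
     (\<forall>x\<in>W. \<forall>y\<in>W. add A x y \<in> W) \<and> (\<forall>c. \<forall>x\<in>W. smult A c x \<in> W)"

definition hom :: "('k, 'v) lsa \<Rightarrow> nat \<Rightarrow> 'v set" where
  "hom A p = (if p = 0 then even A else odd A)"

definition psign :: "nat \<Rightarrow> nat \<Rightarrow> 'k::field" where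
  "psign p q = (- 1) ^ (p * q)"

definition lie_superalgebra :: "('k::field, 'v) lsa \<Rightarrow> bool" where
  "lie_superalgebra A \<longleftrightarrow>
     vector_space_on A \<and>
     subspace_on A (even A) \<and> subspace_on A (odd A) \<and>
     even A \<inter> odd A = {zero A} \<and>
     (\<forall>x\<in>carrier A. \<exists>e\<in>even A. \<exists>d\<in>odd A. x = add A e d) \<and>
     (\<forall>x\<in>carrier A. \<forall>y\<in>carrier A. br A x y \<in> carrier A) \<and>
     (\<forall>c. \<forall>x\<in>carrier A. \<forall>y\<in>carrier A. \<forall>z\<in>carrier A.
        br A (add A x y) z = add A (br A x z) (br A y z) \<and>
        br A x (add A y z) = add A (br A x y) (br A x z) \<and>
        br A (smult A c x) y = smult A c (br A x y) \<and>
        br A x (smult A c y) = smult A c (br A x y)) \<and>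
     (\<forall>p\<in>{0,1}. \<forall>q\<in>{0,1}. \<forall>x\<in>hom A p. \<forall>y\<in>hom A q.
        br A x y \<in> hom A ((p + q) mod 2)) \<and>
     (\<forall>p\<in>{0,1}. \<forall>q\<in>{0,1}. \<forall>x\<in>hom A p. \<forall>y\<in>hom A q.
        br A x y = smult A (- psign p q) (br A y x)) \<and>
     (\<forall>p\<in>{0,1}. \<forall>q\<in>{0,1}. \<forall>r\<in>{0,1}. \<forall>x\<in>hom A p. \<forall>y\<in>hom A q. \<forall>z\<in>hom A r.
        add A (smult A (psign p r) (br A x (br A y z)))
          (add A (smult A (psign q p) (br A y (br A z x)))
                 (smult A (psign r q) (br A z (br A x y)))) = zero A)"

definition lincomb :: "('k, 'v) lsa \<Rightarrow> 'k list \<Rightarrow> 'v list \<Rightarrow> 'v" where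
  "lincomb A cs vs = foldr (\<lambda>(c, v) acc. add A (smult A c v) acc) (zip cs vs) (zero A)"

definition span_of :: "('k, 'v) lsa \<Rightarrow> 'v set \<Rightarrow> 'v set" where
  "span_of A S = {lincomb A cs vs | cs vs. length cs = length vs \<and> set vs \<subseteq> S}"

definition lin_indep :: "('k::field, 'v) lsa \<Rightarrow> 'v list \<Rightarrow> bool" where
  "lin_indep A vs \<longleftrightarrow> distinct vs \<and>
     (\<forall>cs. length cs = length vs \<longrightarrow> lincomb A cs vs = zero A \<longrightarrow> (\<forall>c\<in>set cs. c = 0))"

definition is_basis :: "('k::field, 'v) lsa \<Rightarrow> 'v set \<Rightarrow> 'v list \<Rightarrow> bool" where
  "is_basis A W vs \<longleftrightarrow> set vs \<subseteq> W \<and> lin_indep A vs \<and> span_of A (set vs) = W"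

definition fin_dim :: "('k::field, 'v) lsa \<Rightarrow> 'v set \<Rightarrow> bool" where
  "fin_dim A W \<longleftrightarrow> (\<exists>vs. is_basis A W vs)"

definition dim :: "('k::field, 'v) lsa \<Rightarrow> 'v set \<Rightarrow> nat" where
  "dim A W = (LEAST n. \<exists>vs. is_basis A W vs \<and> length vs = n)"

definition bracket_span :: "('k, 'v) lsa \<Rightarrow> 'v set \<Rightarrow> 'v set \<Rightarrow> 'v set" where
  "bracket_span A U V = span_of A {br A u v | u v. u \<in> U \<and> v \<in> V}"

definition derived :: "('k, 'v) lsa \<Rightarrow> 'v set" where
  "derived A = bracket_span A (carrier A) (carrier A)"

fun lcs :: "('k, 'v) lsa \<Rightarrow> nat \<Rightarrow> 'v set" where
  "lcs A 0 = carrier A"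
| "lcs A (Suc n) = bracket_span A (lcs A n) (carrier A)"

definition nilpotent :: "('k, 'v) lsa \<Rightarrow> bool" where
  "nilpotent A \<longleftrightarrow> (\<exists>n. lcs A n = {zero A})"

definition center :: "('k, 'v) lsa \<Rightarrow> 'v set" where
  "center A = {z \<in> carrier A. \<forall>x\<in>carrier A. br A z x = zero A}"

definition coset :: "('k, 'v) lsa \<Rightarrow> 'v set \<Rightarrow> 'v \<Rightarrow> 'v set" where
  "coset A I x = {add A x z | z. z \<in> I}"

definition rep :: "'v set \<Rightarrow> 'v" where
  "rep X = (SOME x. x \<in> X)"

definition quotient :: "('k, 'v) lsa \<Rightarrow> 'v set \<Rightarrow> ('k, 'v set) lsa" where
  "quotient A I =
     \<lparr> carrier = coset A I ` carrier A,
       even = coset A I ` even A,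
       odd = coset A I ` odd A,
       add = (\<lambda>X Y. coset A I (add A (rep X) (rep Y))),
       zero = coset A I (zero A),
       smult = (\<lambda>c X. coset A I (smult A c (rep X))),
       br = (\<lambda>X Y. coset A I (br A (rep X) (rep Y))) \<rparr>"

definition lsa_iso :: "('k, 'v) lsa \<Rightarrow> ('k, 'w) lsa \<Rightarrow> bool" where
  "lsa_iso A B \<longleftrightarrow> (\<exists>f. bij_betw f (carrier A) (carrier B) \<and>
     f ` even A = even B \<and> f ` odd A = odd B \<and>
     (\<forall>x\<in>carrier A. \<forall>y\<in>carrier A. f (add A x y) = add B (f x) (f y)) \<and>
     (\<forall>c. \<forall>x\<in>carrier A. f (smult A c x) = smult B c (f x)) \<and>
     (\<forall>x\<in>carrier A. \<forall>y\<in>carrier A. f (br A x y) = br B (f x) (f y)))"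

text \<open>L is capable if L is isomorphic to H/Z(H) for some Lie superalgebra H;
  since HOL cannot quantify over types inside a formula, the carrier type 'h of H
  is an explicit parameter.\<close>
definition capable :: "'h itself \<Rightarrow> ('k::field, 'v) lsa \<Rightarrow> bool" where
  "capable (_ :: 'h itself) L \<longleftrightarrow>
     (\<exists>H :: ('k, 'h) lsa. lie_superalgebra H \<and> lsa_iso L (quotient H (center H)))"

end

theory Submission
  imports Defs
begin

text \<open>
  Write L' = F z. If some homogeneous x has a centralizer C(x) whose homogeneous elements all
  commute, then C(x) is abelian and, since every bracket is a multiple of z, L is either
  C(x) + F x with C(x) central (when [x, x] \<noteq> 0), or F x + F y + (C(x) \<inter> C(y)) with the last summand central;
  either way dim L/Z(L) \<le> 2. So when dim L/Z(L) > 2, every homogeneous x has homogeneous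
  a, b in C(x) with [a, b] = z.

  Now let L \<cong> H/Z(H) and lift z to w \<in> H. For homogeneous h \<in> H, lift the elements a, b
  attached to the image of h to a', b' \<in> H: then [a', h] and [b', h] are central, so the graded
  Jacobi identity gives [[a', b'], h] = 0. As w \<equiv> [a', b'] modulo Z(H), w is central, i.e. z = 0.
\<close>

section \<open>Vector spaces on a carrier\<close>

locale vspace =
  fixes A :: "('k::field, 'v) lsa"
  assumes vector_space: "vector_space_on A"
begin

lemma zero_closed [simp]: "zero A \<in> carrier A"
  using vector_space unfolding vector_space_on_def by (elim conjE) metis

lemma add_closed [simp]: "x \<in> carrier A \<Longrightarrow> y \<in> carrier A \<Longrightarrow> add A x y \<in> carrier A"
  using vector_space unfolding vector_space_on_def by (elim conjE) metis

lemma smult_closed [simp]: "x \<in> carrier A \<Longrightarrow> smult A c x \<in> carrier A"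
  using vector_space unfolding vector_space_on_def by (elim conjE) metis

lemma a_assoc:
  "x \<in> carrier A \<Longrightarrow> y \<in> carrier A \<Longrightarrow> z \<in> carrier A \<Longrightarrow>
   add A (add A x y) z = add A x (add A y z)"
  using vector_space unfolding vector_space_on_def by (elim conjE) metis

lemma a_comm: "x \<in> carrier A \<Longrightarrow> y \<in> carrier A \<Longrightarrow> add A x y = add A y x"
  using vector_space unfolding vector_space_on_def by (elim conjE) metis

lemma a_lcomm:
  "x \<in> carrier A \<Longrightarrow> y \<in> carrier A \<Longrightarrow> z \<in> carrier A \<Longrightarrow>
   add A x (add A y z) = add A y (add A x z)"
  by (metis a_assoc a_comm)

lemmas a_ac = a_assoc a_comm a_lcomm

lemma r_zero [simp]: "x \<in> carrier A \<Longrightarrow> add A x (zero A) = x"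
  using vector_space unfolding vector_space_on_def by (elim conjE) metis

lemma l_zero [simp]: "x \<in> carrier A \<Longrightarrow> add A (zero A) x = x"
  using a_comm r_zero zero_closed by metis

lemma r_inv_ex: "x \<in> carrier A \<Longrightarrow> \<exists>y\<in>carrier A. add A x y = zero A"
  using vector_space unfolding vector_space_on_def by (elim conjE) metis

lemma smult_assoc [simp]: "x \<in> carrier A \<Longrightarrow> smult A c (smult A d x) = smult A (c * d) x"
  using vector_space unfolding vector_space_on_def by (elim conjE) metis

lemma smult_one [simp]: "x \<in> carrier A \<Longrightarrow> smult A 1 x = x"
  using vector_space unfolding vector_space_on_def by (elim conjE) metis

lemma smult_r_distr:
  "x \<in> carrier A \<Longrightarrow> y \<in> carrier A \<Longrightarrow> smult A c (add A x y) = add A (smult A c x) (smult A c y)"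
  using vector_space unfolding vector_space_on_def by (elim conjE) metis

lemma smult_l_distr: "x \<in> carrier A \<Longrightarrow> smult A (c + d) x = add A (smult A c x) (smult A d x)"
  using vector_space unfolding vector_space_on_def by (elim conjE) metis

lemma a_lcancel:
  assumes "x \<in> carrier A" "y \<in> carrier A" "w \<in> carrier A" "add A x y = add A x w"
  shows "y = w"
proof -
  obtain x' where x': "x' \<in> carrier A" and inv: "add A x' x = zero A"
    using r_inv_ex assms(1) a_comm by metis
  have "y = add A (add A x' x) y" using inv assms by simp
  also have "\<dots> = add A x' (add A x y)" using x' assms by (simp add: a_assoc)
  also have "\<dots> = add A (add A x' x) w" using x' assms by (simp add: a_assoc)
  also have "\<dots> = w" using inv assms by simp
  finally show ?thesis .
qed

lemma smult_l_null [simp]: "x \<in> carrier A \<Longrightarrow> smult A 0 x = zero A"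
  using smult_l_distr[of x 0 0] a_lcancel[of "smult A 0 x" "smult A 0 x" "zero A"] by simp

lemma smult_r_null [simp]: "smult A c (zero A) = zero A"
  using smult_r_distr[of "zero A" "zero A" c] a_lcancel[of "smult A c (zero A)" "smult A c (zero A)" "zero A"]
  by simp

lemma r_neg: "x \<in> carrier A \<Longrightarrow> add A x (smult A (-1) x) = zero A"
  using smult_l_distr[of x 1 "-1"] by simp

lemma add_eq_zero_imp_neg:
  assumes "x \<in> carrier A" "y \<in> carrier A" "add A x y = zero A"
  shows "y = smult A (-1) x"
  using a_lcancel[of x y "smult A (-1) x"] assms r_neg by simp

lemma smult_eq_zero:
  assumes "x \<in> carrier A" "smult A c x = zero A" "c \<noteq> 0"
  shows "x = zero A"
  using assms smult_assoc[of x "inverse c" c] by simp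

lemma add_smult_cancel:
  "u \<in> carrier A \<Longrightarrow> y \<in> carrier A \<Longrightarrow> add A (add A u (smult A (- t) y)) (smult A t y) = u"
  by (simp add: a_assoc flip: smult_l_distr)

lemma lincomb_Nil [simp]: "lincomb A cs [] = zero A" "lincomb A [] vs = zero A"
  by (auto simp: lincomb_def)

lemma lincomb_Cons [simp]: "lincomb A (c # cs) (v # vs) = add A (smult A c v) (lincomb A cs vs)"
  by (simp add: lincomb_def)

lemma lincomb_closed [simp]: "set vs \<subseteq> carrier A \<Longrightarrow> lincomb A cs vs \<in> carrier A"
proof (induction vs arbitrary: cs)
  case (Cons v vs) then show ?case by (cases cs) auto
qed simp

lemma lincomb_in_subspace: "subspace_on A W \<Longrightarrow> set vs \<subseteq> W \<Longrightarrow> lincomb A cs vs \<in> W"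
proof (induction vs arbitrary: cs)
  case Nil then show ?case by (simp add: subspace_on_def)
next
  case (Cons v vs) then show ?case by (cases cs) (auto simp: subspace_on_def)
qed

lemma lincomb_append:
  "length cs = length vs \<Longrightarrow> set vs \<subseteq> carrier A \<Longrightarrow> set ws \<subseteq> carrier A \<Longrightarrow>
   lincomb A (cs @ ds) (vs @ ws) = add A (lincomb A cs vs) (lincomb A ds ws)"
proof (induction vs arbitrary: cs)
  case (Cons v vs) then show ?case by (cases cs) (auto simp: a_assoc)
qed simp

lemma smult_lincomb:
  "set vs \<subseteq> carrier A \<Longrightarrow> smult A c (lincomb A cs vs) = lincomb A (map ((*) c) cs) vs"
proof (induction vs arbitrary: cs)
  case (Cons v vs) then show ?case by (cases cs) (auto simp: smult_r_distr)
qed simp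

lemma lincomb_zero_vectors: "set vs \<subseteq> {zero A} \<Longrightarrow> lincomb A cs vs = zero A"
proof (induction vs arbitrary: cs)
  case (Cons v vs) then show ?case by (cases cs) auto
qed simp

lemma span_closed: "S \<subseteq> carrier A \<Longrightarrow> span_of A S \<subseteq> carrier A"
  unfolding span_of_def by auto

lemma span_base: "v \<in> S \<Longrightarrow> S \<subseteq> carrier A \<Longrightarrow> v \<in> span_of A S"
  unfolding span_of_def by (intro CollectI exI[of _ "[1]"] exI[of _ "[v]"]) auto

lemma span_minimal: "subspace_on A W \<Longrightarrow> S \<subseteq> W \<Longrightarrow> span_of A S \<subseteq> W"
  unfolding span_of_def using lincomb_in_subspace by blast

lemma span_empty: "span_of A {} = {zero A}"
  unfolding span_of_def by (auto intro!: exI[of _ "[]"])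

lemma subspace_span: assumes "S \<subseteq> carrier A" shows "subspace_on A (span_of A S)"
  unfolding subspace_on_def
proof (intro conjI ballI allI)
  show "span_of A S \<subseteq> carrier A" using span_closed assms .
  show "zero A \<in> span_of A S" unfolding span_of_def by (auto intro!: exI[of _ "[]"])
next
  fix x y assume "x \<in> span_of A S" "y \<in> span_of A S"
  then obtain cs vs ds ws where "x = lincomb A cs vs" "length cs = length vs" "set vs \<subseteq> S"
     "y = lincomb A ds ws" "length ds = length ws" "set ws \<subseteq> S" unfolding span_of_def by blast
  then show "add A x y \<in> span_of A S" unfolding span_of_def
    using lincomb_append[of cs vs ws ds] assms
    by (intro CollectI exI[of _ "cs @ ds"] exI[of _ "vs @ ws"]) auto
next
  fix c x assume "x \<in> span_of A S"
  then obtain cs vs where "x = lincomb A cs vs" "length cs = length vs" "set vs \<subseteq> S"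
    unfolding span_of_def by blast
  then show "smult A c x \<in> span_of A S" unfolding span_of_def
    using smult_lincomb[of vs c cs] assms
    by (intro CollectI exI[of _ "map ((*) c) cs"] exI[of _ vs]) auto
qed

lemma add_smult_in_span_insert:
  "r \<in> span_of A S \<Longrightarrow> add A (smult A c w) r \<in> span_of A (insert w S)"
proof -
  assume "r \<in> span_of A S"
  then obtain cs vs where "r = lincomb A cs vs" "length cs = length vs" "set vs \<subseteq> S"
    unfolding span_of_def by blast
  then show ?thesis unfolding span_of_def
    by (intro CollectI exI[of _ "c # cs"] exI[of _ "w # vs"]) auto
qed

lemma span_insert_decomp:
  assumes "S \<subseteq> carrier A" "v \<in> carrier A" "x \<in> span_of A (insert v S)"
  shows "\<exists>a s. s \<in> span_of A S \<and> x = add A (smult A a v) s"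
proof -
  have zero_S: "zero A \<in> span_of A S"
    using subspace_span[OF assms(1)] by (simp add: subspace_on_def)
  have "\<exists>a s. s \<in> span_of A S \<and> lincomb A cs vs = add A (smult A a v) s"
    if "set vs \<subseteq> insert v S" for cs vs
    using that
  proof (induction vs arbitrary: cs)
    case Nil then show ?case using zero_S assms by (intro exI[of _ 0] exI[of _ "zero A"]) simp
  next
    case (Cons u vs)
    show ?case
    proof (cases cs)
      case Nil then show ?thesis using zero_S assms by (intro exI[of _ 0] exI[of _ "zero A"]) simp
    next
      case (Cons c cs')
      obtain a s where as: "s \<in> span_of A S" "lincomb A cs' vs = add A (smult A a v) s"
        using Cons.IH[of cs'] Cons.prems by auto
      have sc: "s \<in> carrier A" using as span_closed assms by blast
      have uc: "u \<in> carrier A" using Cons.prems assms by auto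
      show ?thesis
      proof (cases "u = v")
        case True
        then have "lincomb A cs (u # vs) = add A (smult A (c + a) v) s"
          using Cons as sc assms by (simp add: smult_l_distr a_assoc)
        then show ?thesis using as by blast
      next
        case False
        then have "add A (smult A c u) s \<in> span_of A S"
          using Cons.prems subspace_span[OF assms(1)] as span_base[of u S] assms
          unfolding subspace_on_def by auto
        moreover have "lincomb A cs (u # vs) = add A (smult A a v) (add A (smult A c u) s)"
          using Cons as sc uc assms by (simp add: a_lcomm)
        ultimately show ?thesis by blast
      qed
    qed
  qed
  then show ?thesis using assms(3) unfolding span_of_def by blast
qed

lemma span_singleton: "v \<in> carrier A \<Longrightarrow> x \<in> span_of A {v} \<Longrightarrow> \<exists>a. x = smult A a v"
  using span_insert_decomp[of "{}" v x] span_empty by auto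

lemma subspace_Int: "subspace_on A U \<Longrightarrow> subspace_on A W \<Longrightarrow> subspace_on A (U \<inter> W)"
  unfolding subspace_on_def by auto

lemma subspace_carrier: "subspace_on A (carrier A)"
  unfolding subspace_on_def by auto

lemma lin_indep_Cons:
  assumes bs: "set bs \<subseteq> carrier A" "lin_indep A bs"
    and w: "w \<in> carrier A" "w \<notin> span_of A (set bs)"
  shows "lin_indep A (w # bs)"
  unfolding lin_indep_def
proof (intro conjI allI impI)
  show "distinct (w # bs)" using bs w span_base[of w "set bs"] by (auto simp: lin_indep_def)
  fix cs assume "length cs = length (w # bs)" "lincomb A cs (w # bs) = zero A"
  then obtain c ds where cs: "cs = c # ds" "length ds = length bs"
    and sum: "add A (smult A c w) (lincomb A ds bs) = zero A"
    by (cases cs) auto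
  define l where "l = lincomb A ds bs"
  have l: "l \<in> span_of A (set bs)" "l \<in> carrier A"
    unfolding l_def span_of_def using cs bs by auto
  have "c = 0"
  proof (rule ccontr)
    assume "c \<noteq> 0"
    have "smult A c w = smult A (-1) l"
      using add_eq_zero_imp_neg[OF l(2)] sum w a_comm l_def l by auto
    then have "w = smult A (inverse c) (smult A (-1) l)"
      using w \<open>c \<noteq> 0\<close> by (metis smult_assoc left_inverse smult_one)
    then show False
      using w l subspace_span[OF bs(1)] unfolding subspace_on_def by auto
  qed
  then have "lincomb A ds bs = zero A" using sum w l l_def by simp
  then show "\<forall>c\<in>set cs. c = 0" using bs(2) cs \<open>c = 0\<close> unfolding lin_indep_def by auto
qed

lemma span_Cons_exchange:
  assumes S: "S \<subseteq> carrier A" and v: "v \<in> carrier A"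
    and W: "subspace_on A W" "W \<subseteq> span_of A (insert v S)"
    and w: "w \<in> W" "w = add A (smult A a v) s" "s \<in> span_of A S" "a \<noteq> 0"
    and bs: "span_of A (set bs) = W \<inter> span_of A S"
    and x: "x \<in> W"
  shows "x \<in> span_of A (set (w # bs))"
proof -
  obtain b t where t: "t \<in> span_of A S" and xt: "x = add A (smult A b v) t"
    using span_insert_decomp[OF S v] x W(2) by blast
  have tc: "t \<in> carrier A" "s \<in> carrier A" using t w(3) span_closed[OF S] by auto
  have wc: "w \<in> carrier A" using w(1) W(1) unfolding subspace_on_def by blast
  \<comment> \<open>subtracting (b/a) w from x cancels its v-component\<close>
  define c where "c = b / a"
  define r where "r = add A t (smult A (- c) s)"
  have r: "r \<in> span_of A S" "r \<in> carrier A"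
    unfolding r_def using t w(3) subspace_span[OF S] tc unfolding subspace_on_def by auto
  have "smult A c w = add A (smult A b v) (smult A c s)"
    unfolding w(2) c_def using v tc w(4) by (simp add: smult_r_distr)
  then have "add A (smult A c w) r
      = add A (smult A b v) (add A t (add A (smult A c s) (smult A (- c) s)))"
    unfolding r_def using v tc by (simp add: a_assoc a_lcomm)
  also have "\<dots> = x" using xt v tc by (simp flip: smult_l_distr)
  finally have xr: "x = add A (smult A c w) r" ..
  have "add A x (smult A (- c) w) = add A (add A r (smult A c w)) (smult A (- c) w)"
    using xr r wc by (simp add: a_comm)
  also have "\<dots> = r" using add_smult_cancel[OF r(2) wc, of "- c"] by simp
  finally have "r \<in> W" using x w(1) W(1) unfolding subspace_on_def by metis
  then have "r \<in> span_of A (set bs)" using bs r(1) by blast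
  then show ?thesis using xr add_smult_in_span_insert by fastforce
qed

lemma basis_exists:
  assumes "finite S" "S \<subseteq> carrier A" "subspace_on A W" "W \<subseteq> span_of A S"
  shows "\<exists>bs. is_basis A W bs \<and> length bs \<le> card S"
  using assms
proof (induction S arbitrary: W rule: finite_induct)
  case empty
  then have "W = {zero A}" using span_empty by (auto simp: subspace_on_def)
  then have "is_basis A W []" unfolding is_basis_def lin_indep_def using span_empty by auto
  then show ?case by auto
next
  case (insert v S)
  have S: "S \<subseteq> carrier A" and v: "v \<in> carrier A" using insert.prems by auto
  have W: "W \<subseteq> carrier A" using insert.prems(2) by (simp add: subspace_on_def)
  define W' where "W' = W \<inter> span_of A S"
  have "subspace_on A W'"
    unfolding W'_def using subspace_Int[OF insert.prems(2) subspace_span[OF S]] .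
  then obtain bs where bs: "set bs \<subseteq> W'" "lin_indep A bs" "span_of A (set bs) = W'"
    and len: "length bs \<le> card S"
    using insert.IH[OF S \<open>subspace_on A W'\<close>] W'_def unfolding is_basis_def by auto
  show ?case
  proof (cases "W \<subseteq> span_of A S")
    case True
    then have "W' = W" unfolding W'_def by blast
    then show ?thesis using bs len insert.hyps unfolding is_basis_def by auto
  next
    case False
    then obtain w where w: "w \<in> W" "w \<notin> span_of A S" by blast
    obtain a s where s: "s \<in> span_of A S" and ws: "w = add A (smult A a v) s"
      using span_insert_decomp[OF S v] w insert.prems(3) by blast
    have "a \<noteq> 0" using w s ws v span_closed[OF S] by auto
    have bsc: "set bs \<subseteq> carrier A" using bs W'_def W by blast
    have indep: "lin_indep A (w # bs)"
      using lin_indep_Cons[OF bsc bs(2)] w W bs(3) W'_def by auto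
    have "x \<in> span_of A (set (w # bs))" if "x \<in> W" for x
      using span_Cons_exchange[OF S v insert.prems(2,3) w(1) ws s \<open>a \<noteq> 0\<close>] bs(3) W'_def that
      by simp
    moreover have "span_of A (set (w # bs)) \<subseteq> W"
      using span_minimal[OF insert.prems(2)] bs(1) w W'_def by simp
    ultimately have "span_of A (set (w # bs)) = W" by blast
    then have "is_basis A W (w # bs)" unfolding is_basis_def using indep w bs(1) W'_def by auto
    then show ?thesis using len insert.hyps by auto
  qed
qed

lemma dim_le_basis_length: "is_basis A W bs \<Longrightarrow> dim A W \<le> length bs"
  unfolding dim_def by (rule Least_le) blast

lemma basis_of_dim: "is_basis A W bs \<Longrightarrow> \<exists>bs'. is_basis A W bs' \<and> length bs' = dim A W"
  unfolding dim_def by (rule LeastI[of _ "length bs"]) blast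

lemma basis_Nil: "is_basis A W [] \<Longrightarrow> W = {zero A}"
  unfolding is_basis_def using span_empty by simp

lemma basis_singleton:
  assumes "is_basis A W [z]" "W \<subseteq> carrier A"
  shows "z \<in> W" "z \<noteq> zero A" "W \<subseteq> range (\<lambda>c. smult A c z)"
proof -
  have W: "W = span_of A {z}" and "z \<in> W" and indep: "lin_indep A [z]"
    using assms unfolding is_basis_def by auto
  then show "z \<in> W" by simp
  show "z \<noteq> zero A"
  proof
    assume "z = zero A"
    then have "lincomb A [1] [z] = zero A" by simp
    moreover have "length [1::'k] = length [z]" by simp
    ultimately have "\<forall>c\<in>set [1::'k]. c = 0" using indep unfolding lin_indep_def by blast
    then show False by simp
  qed
  show "W \<subseteq> range (\<lambda>c. smult A c z)" using span_singleton \<open>z \<in> W\<close> W assms(2) by blast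
qed

lemma basis_of_subspace:
  assumes "fin_dim A (carrier A)" "subspace_on A W"
  shows "\<exists>bs. is_basis A W bs \<and> length bs = dim A W"
proof -
  obtain vs where "is_basis A (carrier A) vs" using assms(1) unfolding fin_dim_def by blast
  then have "set vs \<subseteq> carrier A" "W \<subseteq> span_of A (set vs)"
    using assms(2) unfolding is_basis_def subspace_on_def by auto
  then obtain bs where "is_basis A W bs" using basis_exists[of "set vs" W] assms(2) by auto
  then show ?thesis using basis_of_dim by blast
qed

lemma dim_zero_subspace:
  assumes "fin_dim A (carrier A)" "subspace_on A W" "dim A W = 0"
  shows "W = {zero A}"
  using basis_of_subspace[OF assms(1,2)] assms(3) basis_Nil by auto

lemma dim_one_subspace:
  assumes "fin_dim A (carrier A)" "subspace_on A W" "dim A W = 1"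
  obtains z where "z \<in> W" "z \<noteq> zero A" "W \<subseteq> range (\<lambda>c. smult A c z)"
proof -
  obtain bs where "is_basis A W bs" "length bs = 1" using basis_of_subspace[OF assms(1,2)] assms(3) by auto
  then obtain z where "is_basis A W [z]" by (cases bs) auto
  then show ?thesis using that basis_singleton assms(2) unfolding subspace_on_def by blast
qed

end

section \<open>Lie superalgebras\<close>

locale lie_superalg =
  fixes A :: "('k::field, 'v) lsa"
  assumes lie_superalgebra: "lie_superalgebra A"

sublocale lie_superalg \<subseteq> vspace
  using lie_superalgebra unfolding lie_superalgebra_def by unfold_locales blast

context lie_superalg
begin

lemma even_subspace: "subspace_on A (even A)"
  using lie_superalgebra unfolding lie_superalgebra_def by (elim conjE)

lemma odd_subspace: "subspace_on A (odd A)"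
  using lie_superalgebra unfolding lie_superalgebra_def by (elim conjE)

lemma even_in_carrier: "x \<in> even A \<Longrightarrow> x \<in> carrier A"
  using even_subspace unfolding subspace_on_def by blast

lemma odd_in_carrier: "x \<in> odd A \<Longrightarrow> x \<in> carrier A"
  using odd_subspace unfolding subspace_on_def by blast

lemma even_odd_Int: "even A \<inter> odd A = {zero A}"
  using lie_superalgebra unfolding lie_superalgebra_def by (elim conjE)

lemma even_odd_decomp: "x \<in> carrier A \<Longrightarrow> \<exists>e\<in>even A. \<exists>d\<in>odd A. x = add A e d"
  using lie_superalgebra unfolding lie_superalgebra_def by (elim conjE) blast

lemma br_closed [simp]: "x \<in> carrier A \<Longrightarrow> y \<in> carrier A \<Longrightarrow> br A x y \<in> carrier A"
  using lie_superalgebra unfolding lie_superalgebra_def by (elim conjE) blast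

lemma br_add_left:
  "x \<in> carrier A \<Longrightarrow> y \<in> carrier A \<Longrightarrow> z \<in> carrier A \<Longrightarrow>
   br A (add A x y) z = add A (br A x z) (br A y z)"
  using lie_superalgebra unfolding lie_superalgebra_def by (elim conjE) blast

lemma br_add_right:
  "x \<in> carrier A \<Longrightarrow> y \<in> carrier A \<Longrightarrow> z \<in> carrier A \<Longrightarrow>
   br A x (add A y z) = add A (br A x y) (br A x z)"
  using lie_superalgebra unfolding lie_superalgebra_def by (elim conjE) blast

lemma br_smult_left:
  "x \<in> carrier A \<Longrightarrow> y \<in> carrier A \<Longrightarrow> br A (smult A c x) y = smult A c (br A x y)"
  using lie_superalgebra unfolding lie_superalgebra_def by (elim conjE) blast

lemma br_smult_right:
  "x \<in> carrier A \<Longrightarrow> y \<in> carrier A \<Longrightarrow> br A x (smult A c y) = smult A c (br A x y)"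
  using lie_superalgebra unfolding lie_superalgebra_def by (elim conjE) blast

lemma hom_simps [simp]: "hom A 0 = even A" "hom A (Suc 0) = odd A"
  by (auto simp: hom_def)

lemma hom_in_carrier: "p \<in> {0,1} \<Longrightarrow> x \<in> hom A p \<Longrightarrow> x \<in> carrier A"
  using even_in_carrier odd_in_carrier by auto

lemma hom_smult: "p \<in> {0,1} \<Longrightarrow> x \<in> hom A p \<Longrightarrow> smult A c x \<in> hom A p"
  using even_subspace odd_subspace unfolding subspace_on_def by auto

lemma br_hom:
  "p \<in> {0,1} \<Longrightarrow> q \<in> {0,1} \<Longrightarrow> x \<in> hom A p \<Longrightarrow> y \<in> hom A q \<Longrightarrow>
   br A x y \<in> hom A ((p + q) mod 2)"
  using lie_superalgebra unfolding lie_superalgebra_def by (elim conjE) meson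

lemma br_antisym:
  "p \<in> {0,1} \<Longrightarrow> q \<in> {0,1} \<Longrightarrow> x \<in> hom A p \<Longrightarrow> y \<in> hom A q \<Longrightarrow>
   br A x y = smult A (- psign p q) (br A y x)"
  using lie_superalgebra unfolding lie_superalgebra_def by (elim conjE) blast

lemma jacobi:
  "p \<in> {0,1} \<Longrightarrow> q \<in> {0,1} \<Longrightarrow> r \<in> {0,1} \<Longrightarrow>
   x \<in> hom A p \<Longrightarrow> y \<in> hom A q \<Longrightarrow> z \<in> hom A r \<Longrightarrow>
   add A (smult A (psign p r) (br A x (br A y z)))
     (add A (smult A (psign q p) (br A y (br A z x)))
            (smult A (psign r q) (br A z (br A x y)))) = zero A"
  using lie_superalgebra unfolding lie_superalgebra_def by (elim conjE) meson

lemma psign_nonzero: "psign p q \<noteq> (0::'k)"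
  by (simp add: psign_def)

lemma br_zero_left [simp]: "y \<in> carrier A \<Longrightarrow> br A (zero A) y = zero A"
  using br_smult_left[of "zero A" y 0] by simp

lemma br_zero_right [simp]: "x \<in> carrier A \<Longrightarrow> br A x (zero A) = zero A"
  using br_smult_right[of x "zero A" 0] by simp

lemma br_antisym_zero:
  "p \<in> {0,1} \<Longrightarrow> q \<in> {0,1} \<Longrightarrow> x \<in> hom A p \<Longrightarrow> y \<in> hom A q \<Longrightarrow>
   br A y x = zero A \<Longrightarrow> br A x y = zero A"
  using br_antisym[of p q x y] by simp

lemma even_odd_add_eq_zero:
  assumes "e \<in> even A" "d \<in> odd A" "add A e d = zero A"
  shows "e = zero A" "d = zero A"
proof -
  have "d = smult A (-1) e"
    using add_eq_zero_imp_neg assms even_in_carrier odd_in_carrier by blast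
  then have "d \<in> even A" using even_subspace assms(1) unfolding subspace_on_def by simp
  then show "d = zero A" using even_odd_Int assms(2) by blast
  then show "e = zero A" using assms even_in_carrier by simp
qed

lemma br_even_odd_left_zero:
  assumes "e \<in> even A" "d \<in> odd A" "r \<in> {0,1}" "x \<in> hom A r"
    and "br A (add A e d) x = zero A"
  shows "br A e x = zero A" "br A d x = zero A"
proof -
  have ec: "e \<in> carrier A" and dc: "d \<in> carrier A" and xc: "x \<in> carrier A"
    using assms even_in_carrier odd_in_carrier hom_in_carrier by auto
  have sum: "add A (br A e x) (br A d x) = zero A"
    using assms(5) br_add_left[OF ec dc xc] by simp
  have he: "br A e x \<in> hom A r" and hd: "br A d x \<in> hom A ((1 + r) mod 2)"
    using br_hom[of 0 r e x] br_hom[of 1 r d x] assms by auto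
  consider "r = 0" | "r = 1" using assms(3) by blast
  then have "br A e x = zero A \<and> br A d x = zero A"
  proof cases
    case 1 then show ?thesis using even_odd_add_eq_zero[OF _ _ sum] he hd by simp
  next
    case 2
    then have "add A (br A d x) (br A e x) = zero A" using sum a_comm ec dc xc by simp
    then show ?thesis using even_odd_add_eq_zero he hd 2 by simp
  qed
  then show "br A e x = zero A" "br A d x = zero A" by auto
qed

lemma br_eq_zero_if_hom_left:
  assumes "x \<in> carrier A" "y \<in> carrier A"
    and "\<And>p u. p \<in> {0,1} \<Longrightarrow> u \<in> hom A p \<Longrightarrow> br A u y = zero A"
  shows "br A x y = zero A"
proof -
  obtain e d where "e \<in> even A" "d \<in> odd A" "x = add A e d"
    using even_odd_decomp assms(1) by blast
  then show ?thesis
    using assms(2) assms(3)[of 0 e] assms(3)[of 1 d] br_add_left even_in_carrier odd_in_carrier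
    by simp
qed

lemma br_eq_zero_if_hom_right:
  assumes "x \<in> carrier A" "y \<in> carrier A"
    and "\<And>p u. p \<in> {0,1} \<Longrightarrow> u \<in> hom A p \<Longrightarrow> br A x u = zero A"
  shows "br A x y = zero A"
proof -
  obtain e d where "e \<in> even A" "d \<in> odd A" "y = add A e d"
    using even_odd_decomp assms(2) by blast
  then show ?thesis
    using assms(1) assms(3)[of 0 e] assms(3)[of 1 d] br_add_right even_in_carrier odd_in_carrier
    by simp
qed

lemma center_in_carrier: "z \<in> center A \<Longrightarrow> z \<in> carrier A"
  by (simp add: center_def)

lemma center_br_left: "z \<in> center A \<Longrightarrow> x \<in> carrier A \<Longrightarrow> br A z x = zero A"
  by (simp add: center_def)

lemma center_br_right:
  assumes "z \<in> center A" "x \<in> carrier A"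
  shows "br A x z = zero A"
proof (rule br_eq_zero_if_hom_left[OF assms(2) center_in_carrier[OF assms(1)]])
  fix p u assume u: "p \<in> {0,1}" "u \<in> hom A p"
  obtain e d where ed: "e \<in> even A" "d \<in> odd A" "z = add A e d"
    using even_odd_decomp center_in_carrier assms by blast
  have "br A (add A e d) u = zero A" using center_br_left[OF assms(1)] ed(3) u hom_in_carrier by simp
  then have "br A e u = zero A" "br A d u = zero A" using br_even_odd_left_zero[OF ed(1,2) u] by auto
  then have "br A u e = zero A" "br A u d = zero A"
    using br_antisym_zero[of p 0 u e] br_antisym_zero[of p 1 u d] u ed by auto
  then show "br A u z = zero A"
    using ed u hom_in_carrier even_in_carrier odd_in_carrier br_add_right by simp
qed

lemma subspace_center: "subspace_on A (center A)"
  unfolding subspace_on_def center_def by (auto simp: br_add_left br_smult_left)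

lemma subspace_derived: "subspace_on A (derived A)"
  unfolding derived_def bracket_span_def by (rule subspace_span) auto

lemma br_in_derived: "x \<in> carrier A \<Longrightarrow> y \<in> carrier A \<Longrightarrow> br A x y \<in> derived A"
  unfolding derived_def bracket_span_def by (rule span_base) auto

lemma derived_subset_carrier: "derived A \<subseteq> carrier A"
  using subspace_derived unfolding subspace_on_def by blast

lemma derived_trivial_if_abelian:
  assumes "\<forall>u\<in>carrier A. \<forall>v\<in>carrier A. br A u v = zero A"
  shows "derived A = {zero A}"
proof -
  have brackets: "{br A u v | u v. u \<in> carrier A \<and> v \<in> carrier A} \<subseteq> {zero A}"
    using assms by auto
  have "w = zero A" if w: "w \<in> derived A" for w
  proof -
    obtain cs vs where "w = lincomb A cs vs"
      and "set vs \<subseteq> {br A u v | u v. u \<in> carrier A \<and> v \<in> carrier A}"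
      using w unfolding derived_def bracket_span_def span_of_def by blast
    then show ?thesis using brackets lincomb_zero_vectors[of vs cs] by simp
  qed
  moreover have "zero A \<in> derived A" using subspace_derived by (simp add: subspace_on_def)
  ultimately show ?thesis by blast
qed

end

section \<open>Quotients\<close>

locale quotient_space = vspace +
  fixes I :: "'v set"
  assumes subspace: "subspace_on A I"
begin

abbreviation "cs \<equiv> coset A I"
abbreviation "Q \<equiv> quotient A I"

lemma I_in_carrier: "i \<in> I \<Longrightarrow> i \<in> carrier A"
  using subspace unfolding subspace_on_def by blast

lemma zero_in_I: "zero A \<in> I"
  using subspace unfolding subspace_on_def by blast

lemma I_add: "i \<in> I \<Longrightarrow> j \<in> I \<Longrightarrow> add A i j \<in> I"
  using subspace unfolding subspace_on_def by blast

lemma I_smult: "i \<in> I \<Longrightarrow> smult A c i \<in> I"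
  using subspace unfolding subspace_on_def by blast

lemma in_coset_self: "x \<in> carrier A \<Longrightarrow> x \<in> cs x"
  unfolding coset_def using zero_in_I by (intro CollectI exI[of _ "zero A"]) simp

lemma coset_add_I:
  assumes "x \<in> carrier A" "i \<in> I"
  shows "cs (add A x i) = cs x"
proof
  have ic: "i \<in> carrier A" using I_in_carrier assms by blast
  show "cs (add A x i) \<subseteq> cs x"
  proof
    fix y assume "y \<in> cs (add A x i)"
    then obtain j where j: "j \<in> I" "y = add A (add A x i) j" unfolding coset_def by blast
    then have "y = add A x (add A i j)" using assms ic I_in_carrier a_assoc by simp
    then show "y \<in> cs x" unfolding coset_def using I_add[OF assms(2) j(1)] by blast
  qed
  show "cs x \<subseteq> cs (add A x i)"
  proof
    fix y assume "y \<in> cs x"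
    then obtain j where j: "j \<in> I" "y = add A x j" unfolding coset_def by blast
    have jc: "j \<in> carrier A" using I_in_carrier j by blast
    have "add A (add A x i) (add A (smult A (-1) i) j) = add A x (add A (add A i (smult A (-1) i)) j)"
      using assms ic jc by (simp add: a_ac)
    also have "\<dots> = y" using r_neg ic jc j by simp
    finally show "y \<in> cs (add A x i)" unfolding coset_def
      using I_add[OF I_smult[OF assms(2)] j(1)]
      by (intro CollectI exI[of _ "add A (smult A (-1) i) j"]) simp
  qed
qed

lemma coset_eqD: "x \<in> carrier A \<Longrightarrow> cs x = cs y \<Longrightarrow> \<exists>i\<in>I. x = add A y i"
  using in_coset_self[of x] unfolding coset_def by auto

lemma coset_eq_zero_imp: "x \<in> carrier A \<Longrightarrow> cs x = cs (zero A) \<Longrightarrow> x \<in> I"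
  using coset_eqD[of x "zero A"] I_in_carrier by auto

lemma rep_coset: "x \<in> carrier A \<Longrightarrow> \<exists>i\<in>I. rep (cs x) = add A x i"
  using someI[of "\<lambda>y. y \<in> cs x", OF in_coset_self] unfolding rep_def coset_def by blast

lemma quotient_carrier: "carrier Q = cs ` carrier A"
  by (simp add: quotient_def)

lemma quotient_hom: "p \<in> {0,1} \<Longrightarrow> hom Q p = cs ` hom A p"
  by (auto simp: hom_def quotient_def)

lemma quotient_zero: "zero Q = cs (zero A)"
  by (simp add: quotient_def)

lemma quotient_add:
  assumes "x \<in> carrier A" "y \<in> carrier A"
  shows "add Q (cs x) (cs y) = cs (add A x y)"
proof -
  obtain i j where ij: "i \<in> I" "j \<in> I" "rep (cs x) = add A x i" "rep (cs y) = add A y j"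
    using rep_coset assms by metis
  have "add Q (cs x) (cs y) = cs (add A (add A x i) (add A y j))"
    using ij by (simp add: quotient_def)
  also have "add A (add A x i) (add A y j) = add A (add A x y) (add A i j)"
    using assms ij I_in_carrier by (simp add: a_ac)
  also have "cs \<dots> = cs (add A x y)" using coset_add_I assms I_add ij by simp
  finally show ?thesis .
qed

lemma quotient_smult:
  assumes "x \<in> carrier A"
  shows "smult Q c (cs x) = cs (smult A c x)"
proof -
  obtain i where i: "i \<in> I" "rep (cs x) = add A x i" using rep_coset assms by metis
  have "smult Q c (cs x) = cs (smult A c (add A x i))" using i by (simp add: quotient_def)
  also have "smult A c (add A x i) = add A (smult A c x) (smult A c i)"
    using assms i I_in_carrier by (simp add: smult_r_distr)
  also have "cs \<dots> = cs (smult A c x)" using coset_add_I assms I_smult i by simp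
  finally show ?thesis .
qed

lemma vector_space_quotient: "vector_space_on Q"
  unfolding vector_space_on_def quotient_carrier
proof (intro conjI; (intro ballI allI)?)
  show "zero Q \<in> cs ` carrier A" using quotient_zero by simp
  fix X Y assume "X \<in> cs ` carrier A" "Y \<in> cs ` carrier A"
  then obtain x y where "x \<in> carrier A" "y \<in> carrier A" "X = cs x" "Y = cs y" by blast
  then show "add Q X Y \<in> cs ` carrier A" "add Q X Y = add Q Y X"
    using quotient_add a_comm by auto
next
  fix c X assume "X \<in> cs ` carrier A"
  then obtain x where "x \<in> carrier A" "X = cs x" by blast
  then show "smult Q c X \<in> cs ` carrier A" using quotient_smult by auto
next
  fix X Y Z assume "X \<in> cs ` carrier A" "Y \<in> cs ` carrier A" "Z \<in> cs ` carrier A"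
  then obtain x y z where "x \<in> carrier A" "y \<in> carrier A" "z \<in> carrier A"
    and "X = cs x" "Y = cs y" "Z = cs z" by blast
  then show "add Q (add Q X Y) Z = add Q X (add Q Y Z)" using quotient_add a_assoc by auto
next
  fix X assume "X \<in> cs ` carrier A"
  then obtain x where x: "x \<in> carrier A" "X = cs x" by blast
  then show "add Q X (zero Q) = X" using quotient_add quotient_zero by simp
  show "\<exists>Y\<in>cs ` carrier A. add Q X Y = zero Q"
    using x quotient_add quotient_zero r_neg by (intro bexI[of _ "cs (smult A (-1) x)"]) auto
  show "smult Q 1 X = X" using x quotient_smult by simp
  fix c d
  show "smult Q c (smult Q d X) = smult Q (c * d) X" using x quotient_smult by simp
  show "smult Q (c + d) X = add Q (smult Q c X) (smult Q d X)"
    using x quotient_smult quotient_add smult_l_distr by simp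
next
  fix c X Y assume "X \<in> cs ` carrier A" "Y \<in> cs ` carrier A"
  then obtain x y where "x \<in> carrier A" "y \<in> carrier A" "X = cs x" "Y = cs y" by blast
  then show "smult Q c (add Q X Y) = add Q (smult Q c X) (smult Q c Y)"
    using quotient_add quotient_smult smult_r_distr by simp
qed

end

sublocale lie_superalg \<subseteq> center_quotient: quotient_space A "center A"
  by unfold_locales (rule subspace_center)

context lie_superalg
begin

lemma quotient_center_br:
  assumes "x \<in> carrier A" "y \<in> carrier A"
  shows "br (quotient A (center A)) (coset A (center A) x) (coset A (center A) y)
           = coset A (center A) (br A x y)"
proof -
  obtain i j where ij: "i \<in> center A" "j \<in> center A"
    "rep (coset A (center A) x) = add A x i" "rep (coset A (center A) y) = add A y j"
    using center_quotient.rep_coset assms by metis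
  have "br A (add A x i) (add A y j) = br A x y"
    using assms ij center_in_carrier center_br_left[OF ij(1)] center_br_right[OF ij(2)]
    by (simp add: br_add_left br_add_right)
  then show ?thesis using ij by (simp add: quotient_def)
qed

end

section \<open>Centralizers and central elements\<close>

definition centralizer :: "('k, 'v) lsa \<Rightarrow> 'v \<Rightarrow> 'v set" where
  "centralizer A x = {u \<in> carrier A. br A u x = zero A}"

context lie_superalg
begin

lemma centralizer_hom_parts:
  assumes "r \<in> {0,1}" "x \<in> hom A r" "u \<in> centralizer A x"
  obtains e d where "e \<in> even A \<inter> centralizer A x" "d \<in> odd A \<inter> centralizer A x" "u = add A e d"
proof -
  obtain e d where ed: "e \<in> even A" "d \<in> odd A" "u = add A e d"
    using even_odd_decomp assms(3) unfolding centralizer_def by blast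
  then have "br A e x = zero A" "br A d x = zero A"
    using br_even_odd_left_zero[OF ed(1,2) assms(1,2)] assms(3) unfolding centralizer_def by auto
  then show ?thesis using that ed even_in_carrier odd_in_carrier unfolding centralizer_def by blast
qed

lemma centralizer_commutative_if_hom:
  assumes x: "r \<in> {0,1}" "x \<in> hom A r"
    and hom: "\<And>p q a b. p \<in> {0,1} \<Longrightarrow> q \<in> {0,1} \<Longrightarrow> a \<in> hom A p \<inter> centralizer A x \<Longrightarrow>
                b \<in> hom A q \<inter> centralizer A x \<Longrightarrow> br A a b = zero A"
    and "u \<in> centralizer A x" "v \<in> centralizer A x"
  shows "br A u v = zero A"
proof -
  obtain e d where e: "e \<in> even A \<inter> centralizer A x" and d: "d \<in> odd A \<inter> centralizer A x"
    and u: "u = add A e d"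
    using centralizer_hom_parts[OF x assms(4)] by blast
  obtain e' d' where e': "e' \<in> even A \<inter> centralizer A x" and d': "d' \<in> odd A \<inter> centralizer A x"
    and v: "v = add A e' d'"
    using centralizer_hom_parts[OF x assms(5)] by blast
  have comm: "br A a e' = zero A" "br A a d' = zero A" if "p \<in> {0,1}" "a \<in> hom A p \<inter> centralizer A x" for p a
    using hom[of p 0 a e'] hom[of p 1 a d'] that e' d' by auto
  then have "br A e e' = zero A" "br A e d' = zero A" "br A d e' = zero A" "br A d d' = zero A"
    using comm[of 0 e] comm[of 1 d] e d by auto
  then show ?thesis
    using u v e d e' d' even_in_carrier odd_in_carrier by (simp add: br_add_left br_add_right)
qed

lemma central_if_commutes_with_complement:
  assumes abelian: "\<And>u v. u \<in> centralizer A x \<Longrightarrow> v \<in> centralizer A x \<Longrightarrow> br A u v = zero A"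
    and c: "c \<in> centralizer A x" and y: "y \<in> carrier A" "br A c y = zero A"
    and span: "\<And>w. w \<in> carrier A \<Longrightarrow> \<exists>k s. k \<in> centralizer A x \<and> w = add A k (smult A s y)"
  shows "c \<in> center A"
  unfolding center_def
proof (intro CollectI conjI ballI)
  show cc: "c \<in> carrier A" using c unfolding centralizer_def by blast
  fix w assume "w \<in> carrier A"
  then obtain k s where k: "k \<in> centralizer A x" and w: "w = add A k (smult A s y)"
    using span by blast
  have "k \<in> carrier A" using k unfolding centralizer_def by blast
  then show "br A c w = zero A"
    using abelian[OF c k] y cc w by (simp add: br_add_right br_smult_right)
qed

lemma dim_quotient_center_le_two:
  assumes xy: "x \<in> carrier A" "y \<in> carrier A"
    and span: "\<forall>v\<in>carrier A. \<exists>\<alpha> \<beta>. \<exists>c\<in>center A. v = add A (add A (smult A \<alpha> x) (smult A \<beta> y)) c"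
  shows "dim (quotient A (center A)) (carrier (quotient A (center A))) \<le> 2"
proof -
  let ?Q = "quotient A (center A)" and ?cs = "coset A (center A)"
  interpret Q: vspace ?Q by unfold_locales (rule center_quotient.vector_space_quotient)
  define S where "S = {?cs x, ?cs y}"
  have S: "finite S" "S \<subseteq> carrier ?Q" "card S \<le> 2"
    unfolding S_def center_quotient.quotient_carrier using xy by (auto simp: card_insert_if)
  have "carrier ?Q \<subseteq> span_of ?Q S"
  proof
    fix V assume "V \<in> carrier ?Q"
    then obtain v where v: "v \<in> carrier A" "V = ?cs v"
      unfolding center_quotient.quotient_carrier by blast
    obtain \<alpha> \<beta> c where "c \<in> center A" "v = add A (add A (smult A \<alpha> x) (smult A \<beta> y)) c"
      using span v by blast
    then have "V = ?cs (add A (smult A \<alpha> x) (smult A \<beta> y))"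
      using v xy center_quotient.coset_add_I by simp
    also have "\<dots> = lincomb ?Q [\<alpha>, \<beta>] [?cs x, ?cs y]"
      using xy by (simp add: center_quotient.quotient_smult center_quotient.quotient_add
          center_quotient.quotient_zero)
    finally show "V \<in> span_of ?Q S" unfolding span_of_def S_def
      by (intro CollectI exI[of _ "[\<alpha>, \<beta>]"] exI[of _ "[?cs x, ?cs y]"]) simp
  qed
  then obtain bs where "is_basis ?Q (carrier ?Q) bs" "length bs \<le> card S"
    using Q.basis_exists[OF S(1,2) Q.subspace_carrier] by blast
  then show ?thesis using Q.dim_le_basis_length S(3) by fastforce
qed

lemma br_br_eq_zero_if_central:
  assumes hom: "q1 \<in> {0,1}" "q2 \<in> {0,1}" "q \<in> {0,1}" "a \<in> hom A q1" "b \<in> hom A q2" "h \<in> hom A q"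
    and central: "br A a h \<in> center A" "br A b h \<in> center A"
  shows "br A (br A a b) h = zero A"
proof -
  have ac: "a \<in> carrier A" and bc: "b \<in> carrier A" and hc: "h \<in> carrier A"
    using hom hom_in_carrier by blast+
  have "br A a (br A b h) = zero A" using center_br_right[OF central(2) ac] .
  moreover have "br A b (br A h a) = zero A"
  proof -
    have "br A h a = smult A (- psign q q1) (br A a h)" using br_antisym hom by blast
    then have "br A h a \<in> center A" using central(1) center_quotient.I_smult by simp
    then show ?thesis using center_br_right bc by blast
  qed
  ultimately have "smult A (psign q q2) (br A h (br A a b)) = zero A"
    using jacobi[OF hom(1,2,3,4,5,6)] ac bc hc by simp
  then have hab: "br A h (br A a b) = zero A" using smult_eq_zero psign_nonzero ac bc hc by simp
  have pq: "(q1 + q2) mod 2 \<in> {0,1}" by auto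
  show ?thesis by (rule br_antisym_zero[OF pq hom(3) br_hom[OF hom(1,2,4,5)] hom(6) hab])
qed

lemma central_if_bracket_mod_center:
  assumes w: "w \<in> carrier A"
    and brackets: "\<And>q h. q \<in> {0,1} \<Longrightarrow> h \<in> hom A q \<Longrightarrow>
      \<exists>q1\<in>{0,1}. \<exists>q2\<in>{0,1}. \<exists>a\<in>hom A q1. \<exists>b\<in>hom A q2.
        br A a h \<in> center A \<and> br A b h \<in> center A \<and> (\<exists>i\<in>center A. w = add A (br A a b) i)"
  shows "w \<in> center A"
  unfolding center_def
proof (intro CollectI conjI ballI)
  show "w \<in> carrier A" by (fact w)
  fix y assume "y \<in> carrier A"
  then show "br A w y = zero A"
  proof (rule br_eq_zero_if_hom_right[OF w])
    fix q h assume h: "q \<in> {0,1}" "h \<in> hom A q"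
    then obtain q1 q2 a b i where ab: "q1 \<in> {0,1}" "q2 \<in> {0,1}" "a \<in> hom A q1" "b \<in> hom A q2"
      and central: "br A a h \<in> center A" "br A b h \<in> center A"
      and i: "i \<in> center A" "w = add A (br A a b) i"
      using brackets[OF h] by blast
    have "br A (br A a b) h = zero A" using br_br_eq_zero_if_central[OF ab(1,2) h(1) ab(3,4) h(2) central] .
    then show "br A w h = zero A"
      using i ab h hom_in_carrier center_in_carrier center_br_left br_add_left by simp
  qed
qed

end

section \<open>One-dimensional derived algebra\<close>

locale derived_line = lie_superalg +
  fixes z
  assumes z_derived: "z \<in> derived A"
    and z_nonzero: "z \<noteq> zero A"
    and br_in_line: "\<And>x y. x \<in> carrier A \<Longrightarrow> y \<in> carrier A \<Longrightarrow> \<exists>c. br A x y = smult A c z"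

context lie_superalg
begin

lemma br_in_line_if_hom:
  assumes "z \<in> carrier A"
    and hom_br: "\<And>p q x y. p \<in> {0,1} \<Longrightarrow> q \<in> {0,1} \<Longrightarrow> x \<in> hom A p \<Longrightarrow> y \<in> hom A q \<Longrightarrow>
           \<exists>c. br A x y = smult A c z"
    and "x \<in> carrier A" "y \<in> carrier A"
  shows "\<exists>c. br A x y = smult A c z"
proof -
  have right: "\<exists>c. br A x y = smult A c z"
    if hx: "p \<in> {0,1}" "x \<in> hom A p" "y \<in> carrier A" for p x y
  proof -
    obtain e d where ed: "e \<in> even A" "d \<in> odd A" "y = add A e d" using even_odd_decomp hx by blast
    obtain a b where "br A x e = smult A a z" "br A x d = smult A b z"
      using hom_br[of p 0 x e] hom_br[of p 1 x d] hx ed by auto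
    then have "br A x y = smult A (a + b) z"
      using ed hx assms(1) hom_in_carrier even_in_carrier odd_in_carrier
      by (simp add: br_add_right smult_l_distr)
    then show ?thesis ..
  qed
  obtain e d where ed: "e \<in> even A" "d \<in> odd A" "x = add A e d" using even_odd_decomp assms by blast
  obtain a b where "br A e y = smult A a z" "br A d y = smult A b z"
    using right[of 0 e y] right[of 1 d y] assms ed by auto
  then have "br A x y = smult A (a + b) z"
    using ed assms even_in_carrier odd_in_carrier by (simp add: br_add_left smult_l_distr)
  then show ?thesis ..
qed

lemma derived_graded_parts_in_line:
  assumes fd: "fin_dim A (carrier A)"
    and dim: "dim A (derived A \<inter> even A) + dim A (derived A \<inter> odd A) = 1"
  obtains z where "z \<in> derived A" "z \<noteq> zero A"
    and "\<And>p. p \<in> {0,1} \<Longrightarrow> derived A \<inter> hom A p \<subseteq> range (\<lambda>c. smult A c z)"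
proof -
  have subspaces: "subspace_on A (derived A \<inter> hom A p)" if "p \<in> {0,1}" for p
    using that subspace_Int[OF subspace_derived] even_subspace odd_subspace by auto
  obtain p where p: "p \<in> {0,1}" "dim A (derived A \<inter> hom A p) = 1"
    and p': "dim A (derived A \<inter> hom A (1 - p)) = 0"
  proof -
    consider "dim A (derived A \<inter> even A) = 1" "dim A (derived A \<inter> odd A) = 0"
      | "dim A (derived A \<inter> even A) = 0" "dim A (derived A \<inter> odd A) = 1"
      using dim by linarith
    then show ?thesis
    proof cases
      case 1 then show ?thesis using that[of 0] by simp
    next
      case 2 then show ?thesis using that[of 1] by simp
    qed
  qed
  obtain z where z: "z \<in> derived A \<inter> hom A p" "z \<noteq> zero A"
    and line_p: "derived A \<inter> hom A p \<subseteq> range (\<lambda>c. smult A c z)"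
    using dim_one_subspace[OF fd subspaces[OF p(1)] p(2)] by blast
  have "derived A \<inter> hom A (1 - p) = {zero A}"
    using dim_zero_subspace[OF fd subspaces p'] p(1) by auto
  moreover have "zero A = smult A 0 z" using z derived_subset_carrier by auto
  ultimately have line_p': "derived A \<inter> hom A (1 - p) \<subseteq> range (\<lambda>c. smult A c z)" by auto
  show ?thesis
  proof (rule that[of z])
    show "z \<in> derived A" "z \<noteq> zero A" using z by auto
    fix q :: nat assume "q \<in> {0,1}"
    then consider "q = p" | "q = 1 - p" using p(1) by auto
    then show "derived A \<inter> hom A q \<subseteq> range (\<lambda>c. smult A c z)"
      using line_p line_p' by cases auto
  qed
qed

lemma derived_line_if_dim_one:
  assumes fd: "fin_dim A (carrier A)"
    and dim: "dim A (derived A \<inter> even A) + dim A (derived A \<inter> odd A) = 1"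
  shows "\<exists>z. derived_line A z"
proof -
  obtain z where z: "z \<in> derived A" "z \<noteq> zero A"
    and line: "\<And>p. p \<in> {0,1} \<Longrightarrow> derived A \<inter> hom A p \<subseteq> range (\<lambda>c. smult A c z)"
    using derived_graded_parts_in_line[OF fd dim] by blast
  have zc: "z \<in> carrier A" using z derived_subset_carrier by blast
  have hom_line: "\<exists>c. br A x y = smult A c z"
    if "p \<in> {0,1}" "q \<in> {0,1}" "x \<in> hom A p" "y \<in> hom A q" for p q x y
  proof -
    have pq: "(p + q) mod 2 \<in> {0,1}" by auto
    have "br A x y \<in> derived A \<inter> hom A ((p + q) mod 2)"
      using br_hom[OF that] br_in_derived[OF hom_in_carrier[OF that(1,3)] hom_in_carrier[OF that(2,4)]]
      by blast
    then have "br A x y \<in> range (\<lambda>c. smult A c z)" by (rule subsetD[OF line[OF pq]])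
    then show ?thesis by auto
  qed
  have "derived_line A z"
  proof unfold_locales
    show "z \<in> derived A" "z \<noteq> zero A" using z by auto
    show "\<exists>c. br A x y = smult A c z" if "x \<in> carrier A" "y \<in> carrier A" for x y
      using br_in_line_if_hom[OF zc hom_line that] .
  qed
  then show ?thesis ..
qed

end

context derived_line
begin

lemma z_carrier: "z \<in> carrier A"
  using z_derived derived_subset_carrier by blast

lemma split_off_centralizer:
  assumes "t \<in> carrier A" "u \<in> carrier A" "br A u t \<noteq> zero A" "w \<in> carrier A"
  shows "\<exists>c s. c \<in> centralizer A t \<and> w = add A c (smult A s u)"
proof -
  obtain \<kappa> where \<kappa>: "br A u t = smult A \<kappa> z" using br_in_line assms by blast
  obtain \<beta> where \<beta>: "br A w t = smult A \<beta> z" using br_in_line assms by blast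
  have "\<kappa> \<noteq> 0" using \<kappa> assms(3) z_carrier by auto
  define s where "s = \<beta> / \<kappa>"
  define c where "c = add A w (smult A (- s) u)"
  have "br A c t = add A (smult A \<beta> z) (smult A (- s * \<kappa>) z)"
    unfolding c_def using assms \<kappa> \<beta> z_carrier by (simp add: br_add_left br_smult_left)
  also have "\<dots> = smult A (\<beta> + - s * \<kappa>) z" using smult_l_distr[of z \<beta> "- s * \<kappa>"] z_carrier by simp
  also have "\<beta> + - s * \<kappa> = 0" unfolding s_def using \<open>\<kappa> \<noteq> 0\<close> by simp
  finally have "c \<in> centralizer A t" unfolding centralizer_def c_def using assms z_carrier by simp
  moreover have "w = add A c (smult A s u)" unfolding c_def using add_smult_cancel assms by simp
  ultimately show ?thesis by blast
qed

lemma exists_hom_not_centralizing: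
  assumes "x \<in> carrier A"
    and abelian: "\<And>u v. u \<in> centralizer A x \<Longrightarrow> v \<in> centralizer A x \<Longrightarrow> br A u v = zero A"
  shows "\<exists>q y. q \<in> {0,1} \<and> y \<in> hom A q \<and> br A y x \<noteq> zero A"
proof (rule ccontr)
  assume "\<not> ?thesis"
  then have "br A y x = zero A" if "y \<in> carrier A" for y
    using br_eq_zero_if_hom_left[OF that assms(1)] by blast
  then have "centralizer A x = carrier A" unfolding centralizer_def by blast
  then have "derived A = {zero A}" using abelian derived_trivial_if_abelian by simp
  then show False using z_derived z_nonzero by simp
qed

lemma spanned_mod_center_if_br_self_nonzero:
  assumes xc: "x \<in> carrier A" and xx: "br A x x \<noteq> zero A"
    and abelian: "\<And>u v. u \<in> centralizer A x \<Longrightarrow> v \<in> centralizer A x \<Longrightarrow> br A u v = zero A"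
    and v: "v \<in> carrier A"
  shows "\<exists>\<alpha>. \<exists>c\<in>center A. v = add A (smult A \<alpha> x) c"
proof -
  \<comment> \<open>the algebra is C(x) + F x, and C(x) is central\<close>
  have span: "\<exists>k s. k \<in> centralizer A x \<and> w = add A k (smult A s x)" if "w \<in> carrier A" for w
    using split_off_centralizer[OF xc xc xx that] .
  obtain c s where c: "c \<in> centralizer A x" and vc: "v = add A c (smult A s x)"
    using span[OF v] by blast
  have "c \<in> center A"
    using central_if_commutes_with_complement[OF abelian c xc _ span] c
    unfolding centralizer_def by blast
  moreover have "v = add A (smult A s x) c"
    using vc xc c unfolding centralizer_def by (simp add: a_comm)
  ultimately show ?thesis by blast
qed

lemma spanned_by_two_mod_center_if_br_self_zero:
  assumes x: "p \<in> {0,1}" "x \<in> hom A p" and xx: "br A x x = zero A"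
    and abelian: "\<And>u v. u \<in> centralizer A x \<Longrightarrow> v \<in> centralizer A x \<Longrightarrow> br A u v = zero A"
  shows "\<exists>y\<in>carrier A. \<forall>v\<in>carrier A. \<exists>\<alpha> \<beta>. \<exists>c\<in>center A.
           v = add A (add A (smult A \<alpha> x) (smult A \<beta> y)) c"
proof -
  \<comment> \<open>x lies in C(x); with [y, x] \<noteq> 0 the algebra is C(x) + F y, and C(x) \<inter> C(y) is central\<close>
  have xc: "x \<in> carrier A" using x hom_in_carrier by blast
  obtain q y where y: "q \<in> {0,1}" "y \<in> hom A q" "br A y x \<noteq> zero A"
    using exists_hom_not_centralizing[OF xc abelian] by blast
  have yc: "y \<in> carrier A" using y hom_in_carrier by blast
  have xy: "br A x y \<noteq> zero A" using br_antisym_zero[OF y(1) x(1) y(2) x(2)] y(3) by blast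
  have span: "\<exists>k s. k \<in> centralizer A x \<and> w = add A k (smult A s y)" if "w \<in> carrier A" for w
    using split_off_centralizer[OF xc yc y(3) that] .
  have "\<exists>\<alpha> \<beta>. \<exists>c\<in>center A. v = add A (add A (smult A \<alpha> x) (smult A \<beta> y)) c"
    if v: "v \<in> carrier A" for v
  proof -
    obtain k s where k: "k \<in> centralizer A x" and vk: "v = add A k (smult A s y)"
      using span[OF v] by blast
    have kc: "k \<in> carrier A" using k unfolding centralizer_def by blast
    obtain c s' where c: "c \<in> centralizer A y" and kc': "k = add A c (smult A s' x)"
      using split_off_centralizer[OF yc xc xy kc] by blast
    have cc: "c \<in> carrier A" using c unfolding centralizer_def by blast
    have "br A c x = br A k x" using kc' cc xc xx by (simp add: br_add_left br_smult_left)
    then have "c \<in> centralizer A x" using k cc unfolding centralizer_def by simp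
    then have "c \<in> center A"
      using central_if_commutes_with_complement[OF abelian _ yc _ span] c
      unfolding centralizer_def by blast
    moreover have "v = add A (add A (smult A s' x) (smult A s y)) c"
      using vk kc' cc xc yc by (simp add: a_ac)
    ultimately show ?thesis by blast
  qed
  then show ?thesis using yc by blast
qed

lemma spanned_by_two_mod_center:
  assumes x: "p \<in> {0,1}" "x \<in> hom A p"
    and abelian: "\<And>u v. u \<in> centralizer A x \<Longrightarrow> v \<in> centralizer A x \<Longrightarrow> br A u v = zero A"
  shows "\<exists>x1\<in>carrier A. \<exists>y1\<in>carrier A. \<forall>v\<in>carrier A. \<exists>\<alpha> \<beta>. \<exists>c\<in>center A.
           v = add A (add A (smult A \<alpha> x1) (smult A \<beta> y1)) c"
proof (cases "br A x x = zero A")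
  case True
  then show ?thesis
    using spanned_by_two_mod_center_if_br_self_zero[OF x True abelian] x hom_in_carrier by blast
next
  case False
  have xc: "x \<in> carrier A" using x hom_in_carrier by blast
  have "\<exists>\<alpha> \<beta>. \<exists>c\<in>center A. v = add A (add A (smult A \<alpha> x) (smult A \<beta> x)) c"
    if v: "v \<in> carrier A" for v
  proof -
    obtain \<alpha> c where "c \<in> center A" "v = add A (smult A \<alpha> x) c"
      using spanned_mod_center_if_br_self_nonzero[OF xc False abelian v] by blast
    then show ?thesis using xc by (intro exI[of _ \<alpha>] exI[of _ 0] bexI[of _ c]) simp_all
  qed
  then show ?thesis using xc by blast
qed

end

definition bracket_in_all_centralizers :: "('k, 'v) lsa \<Rightarrow> 'v \<Rightarrow> bool" where
  "bracket_in_all_centralizers A z \<longleftrightarrow>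
     (\<forall>p\<in>{0,1}. \<forall>x\<in>hom A p. \<exists>q1\<in>{0,1}. \<exists>q2\<in>{0,1}.
        \<exists>a\<in>hom A q1 \<inter> centralizer A x. \<exists>b\<in>hom A q2 \<inter> centralizer A x. br A a b = z)"

lemma (in derived_line) bracket_in_all_centralizers_if_dim_gt_two:
  assumes "dim (quotient A (center A)) (carrier (quotient A (center A))) > 2"
  shows "bracket_in_all_centralizers A z"
  unfolding bracket_in_all_centralizers_def
proof (intro ballI)
  fix p x assume x: "p \<in> {0,1}" "x \<in> hom A p"
  have "\<exists>q1\<in>{0,1}. \<exists>q2\<in>{0,1}. \<exists>a\<in>hom A q1 \<inter> centralizer A x. \<exists>b\<in>hom A q2 \<inter> centralizer A x.
          br A a b \<noteq> zero A"
  proof (rule ccontr)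
    assume "\<not> ?thesis"
    then have "br A u v = zero A" if "u \<in> centralizer A x" "v \<in> centralizer A x" for u v
      using centralizer_commutative_if_hom[OF x _ that] by blast
    then show False
      using spanned_by_two_mod_center[OF x] dim_quotient_center_le_two assms by fastforce
  qed
  then obtain q1 q2 a b where q: "q1 \<in> {0,1}" "q2 \<in> {0,1}"
    and a: "a \<in> hom A q1 \<inter> centralizer A x" and b: "b \<in> hom A q2 \<inter> centralizer A x"
    and ab: "br A a b \<noteq> zero A" by blast
  have ac: "a \<in> carrier A" and bc: "b \<in> carrier A" using a b unfolding centralizer_def by auto
  obtain c where c: "br A a b = smult A c z" using br_in_line ac bc by blast
  have "c \<noteq> 0" using c ab z_carrier by auto
  let ?a = "smult A (inverse c) a"
  have "?a \<in> hom A q1 \<inter> centralizer A x"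
    using a q hom_smult ac hom_in_carrier x unfolding centralizer_def by (auto simp: br_smult_left)
  moreover have "br A ?a b = z" using c \<open>c \<noteq> 0\<close> ac bc z_carrier by (simp add: br_smult_left)
  ultimately show "\<exists>q1\<in>{0,1}. \<exists>q2\<in>{0,1}. \<exists>a\<in>hom A q1 \<inter> centralizer A x.
      \<exists>b\<in>hom A q2 \<inter> centralizer A x. br A a b = z"
    using q b by blast
qed

section \<open>Capability\<close>

lemma (in lie_superalg) lift_of_bracket_in_all_centralizers_central:
  fixes L :: "('k, 'w) lsa" and f :: "'w \<Rightarrow> 'v set"
  assumes L: "lie_superalgebra L"
    and f_hom: "\<And>p. p \<in> {0,1} \<Longrightarrow> f ` hom L p = coset A (center A) ` hom A p"
    and f_br: "\<forall>x\<in>carrier L. \<forall>y\<in>carrier L. f (br L x y) = br (quotient A (center A)) (f x) (f y)"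
    and f_zero: "f (zero L) = coset A (center A) (zero A)"
    and z: "bracket_in_all_centralizers L z"
    and w: "w \<in> carrier A" "coset A (center A) w = f z"
  shows "w \<in> center A"
proof (rule central_if_bracket_mod_center[OF w(1)])
  interpret L: lie_superalg L by (rule lie_superalg.intro) (fact L)
  let ?cs = "coset A (center A)"
  have f_br_lift: "f (br L x y) = ?cs (br A x' y')"
    if "x \<in> carrier L" "y \<in> carrier L" "x' \<in> carrier A" "y' \<in> carrier A"
      "?cs x' = f x" "?cs y' = f y" for x y x' y'
    using f_br that(1,2) quotient_center_br[OF that(3,4)] that(5,6)[symmetric] by simp
  fix q h assume h: "q \<in> {0,1}" "h \<in> hom A q"
  have hc: "h \<in> carrier A" using h hom_in_carrier by blast
  have "?cs h \<in> f ` hom L q" using f_hom[OF h(1)] h(2) by simp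
  then obtain x where x: "x \<in> hom L q" "f x = ?cs h" by (auto simp del: hom_simps)
  have xc: "x \<in> carrier L" using x h(1) L.hom_in_carrier by blast
  obtain q1 q2 a b where q: "q1 \<in> {0,1}" "q2 \<in> {0,1}"
    and a: "a \<in> hom L q1 \<inter> centralizer L x" and b: "b \<in> hom L q2 \<inter> centralizer L x"
    and ab: "br L a b = z"
    using z[unfolded bracket_in_all_centralizers_def, rule_format, OF h(1) x(1)] by blast
  have ac: "a \<in> carrier L" and bc: "b \<in> carrier L" using a b unfolding centralizer_def by auto
  have "f a \<in> ?cs ` hom A q1" using f_hom[OF q(1)] a by (metis IntD1 imageI)
  moreover have "f b \<in> ?cs ` hom A q2" using f_hom[OF q(2)] b by (metis IntD1 imageI)
  ultimately obtain a' b' where a': "a' \<in> hom A q1" "?cs a' = f a"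
    and b': "b' \<in> hom A q2" "?cs b' = f b"
    by (metis imageE)
  have a'c: "a' \<in> carrier A" and b'c: "b' \<in> carrier A" using a' b' q hom_in_carrier by blast+
  have central: "br A u h \<in> center A"
    if u: "u \<in> carrier A" "?cs u = f v" "v \<in> centralizer L x" for u v
  proof (rule center_quotient.coset_eq_zero_imp)
    have "v \<in> carrier L" "br L v x = zero L" using u(3) unfolding centralizer_def by auto
    then show "?cs (br A u h) = ?cs (zero A)"
      using f_br_lift[of v x u h] xc u hc x(2) f_zero by simp
  qed (use u hc in simp)
  have "?cs w = ?cs (br A a' b')" using w(2) ab f_br_lift[OF ac bc a'c b'c a'(2) b'(2)] by simp
  then have "\<exists>i\<in>center A. w = add A (br A a' b') i"
    using center_quotient.coset_eqD w(1) by blast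
  then show "\<exists>q1\<in>{0,1}. \<exists>q2\<in>{0,1}. \<exists>a\<in>hom A q1. \<exists>b\<in>hom A q2.
      br A a h \<in> center A \<and> br A b h \<in> center A \<and> (\<exists>i\<in>center A. w = add A (br A a b) i)"
    using q a'(1) b'(1) central[OF a'c a'(2) IntD2[OF a]] central[OF b'c b'(2) IntD2[OF b]]
    by blast
qed

lemma (in lie_superalg) bracket_in_all_centralizers_zero_if_iso_quotient_center:
  fixes L :: "('k, 'w) lsa"
  assumes L: "lie_superalgebra L" and iso: "lsa_iso L (quotient A (center A))"
    and z: "z \<in> carrier L" "bracket_in_all_centralizers L z"
  shows "z = zero L"
proof -
  interpret L: lie_superalg L by (rule lie_superalg.intro) (fact L)
  let ?Q = "quotient A (center A)" and ?cs = "coset A (center A)"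
  obtain f where bij: "bij_betw f (carrier L) (carrier ?Q)"
    and f_even: "f ` even L = even ?Q" and f_odd: "f ` odd L = odd ?Q"
    and f_smult: "\<forall>c. \<forall>x\<in>carrier L. f (smult L c x) = smult ?Q c (f x)"
    and f_br: "\<forall>x\<in>carrier L. \<forall>y\<in>carrier L. f (br L x y) = br ?Q (f x) (f y)"
    using iso unfolding lsa_iso_def by blast
  have f_hom: "f ` hom L p = ?cs ` hom A p" if "p \<in> {0,1}" for p
    using that f_even f_odd center_quotient.quotient_hom[OF that] by (auto simp: hom_def)
  have f_carrier: "f x \<in> ?cs ` carrier A" if "x \<in> carrier L" for x
    using bij that center_quotient.quotient_carrier unfolding bij_betw_def by blast
  have f_zero: "f (zero L) = ?cs (zero A)"
  proof -
    obtain u where u: "u \<in> carrier A" "f (zero L) = ?cs u" using f_carrier[OF L.zero_closed] by blast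
    have "f (zero L) = smult ?Q 0 (f (zero L))"
      using f_smult L.smult_l_null[OF L.zero_closed] by (metis L.zero_closed)
    then show ?thesis using u center_quotient.quotient_smult by simp
  qed
  obtain w where w: "w \<in> carrier A" "?cs w = f z" using f_carrier[OF z(1)] by force
  have "w \<in> center A"
    using lift_of_bracket_in_all_centralizers_central[OF L f_hom f_br f_zero z(2) w] .
  then have "?cs w = ?cs (zero A)"
    using center_quotient.coset_add_I[of "zero A" w] center_in_carrier by simp
  then have "f z = f (zero L)" using w(2) f_zero by simp
  then show ?thesis using bij z(1) L.zero_closed unfolding bij_betw_def inj_on_def by blast
qed

theorem mainTheorem7:
  fixes L :: "('k::field, 'v) lsa"
  assumes char2: "(2::'k) \<noteq> 0" and char3: "(3::'k) \<noteq> 0"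
    and lsa: "lie_superalgebra L"
    and fd: "fin_dim L (carrier L)"
    and nil: "nilpotent L"
    and dimL': "dim L (derived L \<inter> even L) + dim L (derived L \<inter> odd L) = 1"
    and dimQ: "dim (quotient L (center L)) (carrier (quotient L (center L))) > 2"
  shows "\<not> capable TYPE('h) L"
proof
  assume "capable TYPE('h) L"
  then obtain H :: "('k, 'h) lsa"
    where H: "lie_superalgebra H" and iso: "lsa_iso L (quotient H (center H))"
    unfolding capable_def by blast
  interpret lie_superalg L by (rule lie_superalg.intro) (fact lsa)
  obtain z where "derived_line L z" using derived_line_if_dim_one[OF fd dimL'] by blast
  then interpret derived_line L z .
  have "bracket_in_all_centralizers L z"
    using bracket_in_all_centralizers_if_dim_gt_two[OF dimQ] .
  then have "z = zero L"
    using lie_superalg.bracket_in_all_centralizers_zero_if_iso_quotient_center[OF _ lsa iso z_carrier] H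
    by (simp add: lie_superalg_def)
  with z_nonzero show False ..
qed

end
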